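(* Let $\mathcal{D}\in\mathbb{C}^{\mathbf{N}(s)\times\mathbf{N}(s)}$ with $\mathrm{ind}(\mathcal{D})=k$. Then (i) $\mathcal{D}^{\mathrm D,\dagger}*_s\mathcal{D}=\mathcal{D}^{c,\dagger}*_s\mathcal{D}$ if and only if $\mathscr{R}(\mathcal{D}^k)\subseteq\mathscr{R}(\mathcal{D}^\dagger)$; (ii) $\mathcal{D}*_s\mathcal{D}^{\dagger,\mathrm D}=\mathcal{D}*_s\mathcal{D}^{c,\dagger}$ if and only if $\mathcal{D}^k=\mathcal{D}^{k+1}*_s\mathcal{D}^\dagger$.
   Context: For positive integers $N_1,\dots,N_s$ write $\mathbf{N}(s)=N_1\times\cdots\times N_s$. For $\mathcal{A}\in\mathbb{C}^{\mathbf{I}(m)\times\mathbf{K}(p)}$ and $\mathcal{B}\in\mathbb{C}^{\mathbf{K}(p)\times\mathbf{J}(n)}$ the Einstein product is the tensor $\mathcal{A}*_p\mathcal{B}\in\mathbb{C}^{\mathbf{I}(m)\times\mathbf{J}(n)}$ with entries $(\mathcal{A}*_p\mathcal{B})_{i_1\dots i_m j_1\dots j_n}=\sum_{k_1,\dots,k_p}\mathcal{A}_{i_1\dots i_m k_1\dots k_p}\mathcal{B}_{k_1\dots k_p j_1\dots j_n}$; the case $n=0$ (so $\mathcal{B}\in\mathbb{C}^{\mathbf{K}(p)}$) is allowed. For $\mathcal{D}\in\mathbb{C}^{\mathbf{N}(s)\times\mathbf{N}(s)}$, powers are $\mathcal{D}^0=\mathcal{I}$, $\mathcal{D}^{j+1}=\mathcal{D}*_s\mathcal{D}^j$,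 where $\mathcal{I}$ is the identity tensor with entries $\mathcal{I}_{i_1\dots i_s j_1\dots j_s}=\prod_{t=1}^s\delta_{i_tj_t}$. The conjugate transpose $\mathcal{A}^*$ of $\mathcal{A}\in\mathbb{C}^{\mathbf{M}(m)\times\mathbf{N}(n)}$ has entries $(\mathcal{A}^* )_{j_1\dots j_n i_1\dots i_m}=\overline{\mathcal{A}_{i_1\dots i_m j_1\dots j_n}}$. For $\mathcal{A}\in\mathbb{C}^{\mathbf{M}(m)\times\mathbf{N}(n)}$, $\mathscr{R}(\mathcal{A})=\{\mathcal{A}*_n\mathcal{E}:\mathcal{E}\in\mathbb{C}^{\mathbf{N}(n)}\}$. The index $\mathrm{ind}(\mathcal{D})$ of $\mathcal{D}\in\mathbb{C}^{\mathbf{N}(s)\times\mathbf{N}(s)}$ is the smallest nonnegative integer $k$ with $\dim\mathscr{R}(\mathcal{D}^k)=\dim\mathscr{R}(\mathcal{D}^{k+1})$. The Moore–Penrose inverse $\mathcal{D}^\dagger$ of $\mathcal{D}\in\mathbb{C}^{\mathbf{N}(s)\times\mathbf{N}(s)}$ is the unique $\mathcal{Y}$ with $\mathcal{D}*_s\mathcal{Y}*_s\mathcal{D}=\mathcal{D}$, $\mathcal{Y}*_s\mathcal{D}*_s\mathcal{Y}=\mathcal{Y}$, $(\mathcal{D}*_s\mathcal{Y})^*=\mathcal{D}*_s\mathcal{Y}$, $(\mathcal{Y}*_s\mathcal{D})^*=\mathcal{Y}*_s\mathcal{D}$. With $k=\mathrm{ind}(\mathcal{D})$, the Drazin inverse $\mathcal{D}^{\mathrm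 D}$ is the unique $\mathcal{Y}$ with $\mathcal{Y}*_s\mathcal{D}^{k+1}=\mathcal{D}^k$, $\mathcal{Y}*_s\mathcal{D}*_s\mathcal{Y}=\mathcal{Y}$, $\mathcal{D}*_s\mathcal{Y}=\mathcal{Y}*_s\mathcal{D}$. Composite inverses: $\mathcal{D}^{\mathrm D,\dagger}=\mathcal{D}^{\mathrm D}*_s\mathcal{D}*_s\mathcal{D}^\dagger$ (DMP), $\mathcal{D}^{\dagger,\mathrm D}=\mathcal{D}^\dagger*_s\mathcal{D}*_s\mathcal{D}^{\mathrm D}$ (MPD), $\mathcal{D}^{c,\dagger}=\mathcal{D}^\dagger*_s\mathcal{D}*_s\mathcal{D}^{\mathrm D}*_s\mathcal{D}*_s\mathcal{D}^\dagger$ (CMP). *)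

theory Defs
  imports Complex_Main "HOL-Library.Function_Algebras"
begin

text \<open>A dimension vector N = [N_1,...,N_s]. Tensors in C^{N(s) x N(s)} are functions
 of two multi-indices (index lists), required to vanish outside the index box.\<close>

definition idx :: "nat list \<Rightarrow> nat list set" where
  "idx N = {i. length i = length N \<and> (\<forall>t<length N. i ! t < N ! t)}"

definition tspace :: "nat list \<Rightarrow> (nat list \<Rightarrow> nat list \<Rightarrow> complex) set" where
  "tspace N = {A. \<forall>i j. (i \<notin> idx N \<or> j \<notin> idx N) \<longrightarrow> A i j = 0}"

definition eprod :: "nat list \<Rightarrow> (nat list \<Rightarrow> nat list \<Rightarrow> complex) \<Rightarrow> (nat list \<Rightarrow> nat list \<Rightarrow> complex) \<Rightarrow> (nat list \<Rightarrow> nat list \<Rightarrow> complex)" where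
  "eprod N A B = (\<lambda>i j. \<Sum>k\<in>idx N. A i k * B k j)"

definition eprodv :: "nat list \<Rightarrow> (nat list \<Rightarrow> nat list \<Rightarrow> complex) \<Rightarrow> (nat list \<Rightarrow> complex) \<Rightarrow> (nat list \<Rightarrow> complex)" where
  "eprodv N A E = (\<lambda>i. \<Sum>k\<in>idx N. A i k * E k)"

definition tid :: "nat list \<Rightarrow> nat list \<Rightarrow> nat list \<Rightarrow> complex" where
  "tid N = (\<lambda>i j. if i \<in> idx N \<and> j \<in> idx N then (\<Prod>t<length N. if i ! t = j ! t then 1 else 0) else 0)"

primrec tpow :: "nat list \<Rightarrow> (nat list \<Rightarrow> nat list \<Rightarrow> complex) \<Rightarrow> nat \<Rightarrow> (nat list \<Rightarrow> nat list \<Rightarrow> complex)" where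
  "tpow N D 0 = tid N"
| "tpow N D (Suc j) = eprod N D (tpow N D j)"

definition tstar :: "(nat list \<Rightarrow> nat list \<Rightarrow> complex) \<Rightarrow> (nat list \<Rightarrow> nat list \<Rightarrow> complex)" where
  "tstar A = (\<lambda>j i. cnj (A i j))"

definition trange :: "nat list \<Rightarrow> (nat list \<Rightarrow> nat list \<Rightarrow> complex) \<Rightarrow> (nat list \<Rightarrow> complex) set" where
  "trange N A = {eprodv N A E | E. E \<in> {E. \<forall>i. i \<notin> idx N \<longrightarrow> E i = 0}}"

definition cdim :: "(nat list \<Rightarrow> complex) set \<Rightarrow> nat" where
  "cdim V = vector_space.dim (\<lambda>(c::complex) (f::nat list \<Rightarrow> complex). (\<lambda>x. c * f x)) V"

definition tind :: "nat list \<Rightarrow> (nat list \<Rightarrow> nat list \<Rightarrow> complex) \<Rightarrow> nat" where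
  "tind N D = (LEAST k. cdim (trange N (tpow N D k)) = cdim (trange N (tpow N D (Suc k))))"

definition mpinv :: "nat list \<Rightarrow> (nat list \<Rightarrow> nat list \<Rightarrow> complex) \<Rightarrow> (nat list \<Rightarrow> nat list \<Rightarrow> complex)" where
  "mpinv N D = (THE Y. Y \<in> tspace N \<and> eprod N (eprod N D Y) D = D \<and> eprod N (eprod N Y D) Y = Y
      \<and> tstar (eprod N D Y) = eprod N D Y \<and> tstar (eprod N Y D) = eprod N Y D)"

definition drazin :: "nat list \<Rightarrow> (nat list \<Rightarrow> nat list \<Rightarrow> complex) \<Rightarrow> (nat list \<Rightarrow> nat list \<Rightarrow> complex)" where
  "drazin N D = (THE Y. Y \<in> tspace N \<and> eprod N Y (tpow N D (Suc (tind N D))) = tpow N D (tind N D)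
      \<and> eprod N (eprod N Y D) Y = Y \<and> eprod N D Y = eprod N Y D)"

definition dmp :: "nat list \<Rightarrow> (nat list \<Rightarrow> nat list \<Rightarrow> complex) \<Rightarrow> (nat list \<Rightarrow> nat list \<Rightarrow> complex)" where
  "dmp N D = eprod N (eprod N (drazin N D) D) (mpinv N D)"

definition mpd :: "nat list \<Rightarrow> (nat list \<Rightarrow> nat list \<Rightarrow> complex) \<Rightarrow> (nat list \<Rightarrow> nat list \<Rightarrow> complex)" where
  "mpd N D = eprod N (eprod N (mpinv N D) D) (drazin N D)"

definition cmp :: "nat list \<Rightarrow> (nat list \<Rightarrow> nat list \<Rightarrow> complex) \<Rightarrow> (nat list \<Rightarrow> nat list \<Rightarrow> complex)" where
  "cmp N D = eprod N (eprod N (eprod N (eprod N (mpinv N D) D) (drazin N D)) D) (mpinv N D)"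

end

theory Submission
  imports Defs
begin

text \<open>
  Write \<open>Y = D\<^sup>D\<close> and \<open>k = ind D\<close>. The tensors \<open>Y D\<close> and \<open>D\<^sup>k\<close> are left and right multiples
  of each other: \<open>Y D = D\<^sup>k (D Y\<^sup>k\<^sup>+\<^sup>1) = (Y\<^sup>k\<^sup>+\<^sup>1 D) D\<^sup>k\<close> and \<open>D\<^sup>k = (Y D) D\<^sup>k = D\<^sup>k (Y D)\<close>.
  Simplifying the composite inverses with \<open>D D\<^sup>\<dagger> D = D\<close> turns (i) into \<open>D\<^sup>\<dagger> D (Y D) = Y D\<close>
  and (ii) into \<open>(Y D) D D\<^sup>\<dagger> = Y D\<close>, so both conditions may be transferred from \<open>Y D\<close> to
  \<open>D\<^sup>k\<close>; finally, as \<open>D\<^sup>\<dagger> D D\<^sup>\<dagger> = D\<^sup>\<dagger>\<close>, the equation \<open>D\<^sup>\<dagger> D C = C\<close> says exactly \<open>\<R>(C) \<subseteq> \<R>(D\<^sup>\<dagger>)\<close>.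

  Since \<open>D\<^sup>D\<close> and \<open>D\<^sup>\<dagger>\<close> are defined by description, most of the work is to show that both
  exist. The powers of \<open>D\<close> satisfy a nontrivial linear relation in the finite-dimensional
  tensor space, which yields \<open>D\<^sup>r = D\<^sup>r\<^sup>+\<^sup>1 X\<close> for some \<open>X\<close> commuting with \<open>D\<close> and hence a Drazin
  inverse at some level \<open>r \<ge> ind D\<close>; the dimension condition defining the index lowers the
  level to \<open>ind D\<close>. The Moore--Penrose inverse is \<open>(D\<^sup>* D)\<^sup>D D\<^sup>*\<close>.
\<close>

type_synonym tensor = "nat list \<Rightarrow> nat list \<Rightarrow> complex"

lemma sum_fun_apply: "(sum f F) x = (\<Sum>a\<in>F. f a x)"
  by (induct F rule: infinite_finite_induct) auto

lemma finite_idx: "finite (idx N)"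
proof (rule finite_subset)
  let ?m = "Max (insert 0 (set N))"
  show "idx N \<subseteq> {xs. set xs \<subseteq> {..<?m} \<and> length xs = length N}"
    by (force simp: idx_def in_set_conv_nth intro: less_le_trans[OF _ Max_ge])
  show "finite {xs. set xs \<subseteq> {..<?m} \<and> length xs = length N}"
    by (rule finite_lists_length_eq) simp
qed

lemma tid_eq: "tid N i j = (if i \<in> idx N \<and> i = j then 1 else 0)"
proof (cases "i \<in> idx N \<and> j \<in> idx N \<and> i \<noteq> j")
  case True
  then obtain t where "t < length N" "i ! t \<noteq> j ! t"
    by (metis (mono_tags, lifting) idx_def mem_Collect_eq nth_equalityI)
  then show ?thesis using True by (auto simp: tid_def intro!: prod_zero)
qed (auto simp: tid_def)

lemma (in vector_space) sequence_linear_relation: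
  fixes f :: "nat \<Rightarrow> 'b"
  assumes "range f \<subseteq> span B" and "finite B"
  obtains F c where "finite F" "(\<Sum>j\<in>F. c j *s f j) = 0" "\<exists>j\<in>F. c j \<noteq> 0"
proof (cases "inj_on f {..card B}")
  case True
  have "\<not> independent (f ` {..card B})"
  proof
    assume "independent (f ` {..card B})"
    then have "card (f ` {..card B}) \<le> card B"
      using independent_span_bound[OF assms(2)] assms(1) by blast
    then show False using True by (simp add: card_image)
  qed
  then obtain T u where T: "finite T" "T \<subseteq> f ` {..card B}"
    and rel: "(\<Sum>v\<in>T. u v *s v) = 0" "\<exists>v\<in>T. u v \<noteq> 0"
    unfolding dependent_explicit by blast
  define F where "F = {j \<in> {..card B}. f j \<in> T}"
  have T_eq: "T = f ` F" using T(2) by (auto simp: F_def)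
  have "inj_on f F" using True by (rule inj_on_subset) (auto simp: F_def)
  then have "(\<Sum>j\<in>F. u (f j) *s f j) = 0" using rel(1) by (simp add: T_eq sum.reindex)
  moreover have "\<exists>j\<in>F. u (f j) \<noteq> 0" using rel(2) T_eq by auto
  ultimately show ?thesis using that[of F "\<lambda>j. u (f j)"] by (simp add: F_def)
next
  case False
  then obtain a b where "a \<noteq> b" "f a = f b" by (auto simp: inj_on_def)
  then show ?thesis
    using that[of "{a, b}" "\<lambda>j. if j = a then 1 else - 1"] by simp
qed

lemma (in vector_space) subspace_subset_of_dim_le:
  assumes "V \<subseteq> W" and "subspace V" and "W \<subseteq> span F" and "finite F"
    and "dim W \<le> dim V"
  shows "W \<subseteq> V"
proof -
  obtain B where B: "B \<subseteq> V" "independent B" "V \<subseteq> span B" "card B = dim V"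
    by (rule basis_exists)
  obtain C where C: "C \<subseteq> W" "independent C" "W \<subseteq> span C" "card C = dim W"
    by (rule basis_exists)
  have "finite B"
    using independent_span_bound[OF assms(4) B(2)] B(1) assms(1,3) by (meson order_trans)
  have "finite C"
    using independent_span_bound[OF assms(4) C(2)] C(1) assms(3) by (meson order_trans)
  have "W \<subseteq> span B"
  proof
    fix w assume w: "w \<in> W"
    show "w \<in> span B"
    proof (rule ccontr)
      assume "w \<notin> span B"
      then have "independent (insert w B)" and "w \<notin> B"
        using independent_insertI[OF _ B(2)] span_base[of w B] by auto
      moreover have "insert w B \<subseteq> span C" using w B(1) C(3) assms(1) by blast
      ultimately have "card (insert w B) \<le> card C"
        using independent_span_bound[OF \<open>finite C\<close>] by simp
      then show False using \<open>finite B\<close> \<open>w \<notin> B\<close> B(4) C(4) assms(5) by simp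
    qed
  qed
  also have "span B \<subseteq> V" using B(1) assms(2) by (rule span_minimal)
  finally show ?thesis .
qed

definition tscale :: "complex \<Rightarrow> tensor \<Rightarrow> tensor" where
  "tscale c A = (\<lambda>i j. c * A i j)"

interpretation tensor_vs: vector_space tscale
  by unfold_locales (auto simp: tscale_def fun_eq_iff algebra_simps)

interpretation vector_vs: vector_space "\<lambda>(c::complex) (f::nat list \<Rightarrow> complex). (\<lambda>x. c * f x)"
  by unfold_locales (auto simp: fun_eq_iff algebra_simps)

definition unit_tensor :: "nat list \<Rightarrow> nat list \<Rightarrow> tensor" where
  "unit_tensor a b = (\<lambda>i j. if i = a \<and> j = b then 1 else 0)"

section \<open>The algebra of square tensors\<close>

context
  fixes N :: "nat list"
begin

abbreviation eprod_N :: "tensor \<Rightarrow> tensor \<Rightarrow> tensor" (infixl "\<odot>" 70)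
  where "A \<odot> B \<equiv> eprod N A B"

abbreviation tpow_N :: "tensor \<Rightarrow> nat \<Rightarrow> tensor" (infixr "[^]" 75)
  where "D [^] n \<equiv> tpow N D n"

lemma eprod_assoc: "A \<odot> B \<odot> C = A \<odot> (B \<odot> C)"
  unfolding eprod_def fun_eq_iff
  by (simp add: sum_distrib_left sum_distrib_right mult.assoc, subst sum.swap, simp)

lemma eprod_closed [intro, simp]: "A \<in> tspace N \<Longrightarrow> B \<in> tspace N \<Longrightarrow> A \<odot> B \<in> tspace N"
  by (auto simp: tspace_def eprod_def)

lemma tid_in_tspace [intro, simp]: "tid N \<in> tspace N"
  by (auto simp: tspace_def tid_eq)

lemma tid_left [simp]:
  assumes "A \<in> tspace N"
  shows "tid N \<odot> A = A"
proof (intro ext)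
  fix i j
  show "(tid N \<odot> A) i j = A i j"
  proof (cases "i \<in> idx N")
    case True
    have "(tid N \<odot> A) i j = (\<Sum>k\<in>idx N. if k = i then A k j else 0)"
      by (auto simp: eprod_def tid_eq intro: sum.cong)
    then show ?thesis using True by (simp add: finite_idx)
  qed (use assms in \<open>simp add: eprod_def tid_eq tspace_def\<close>)
qed

lemma tid_right [simp]: "A \<in> tspace N \<Longrightarrow> A \<odot> tid N = A"
  unfolding fun_eq_iff eprod_def tid_eq
  by (auto simp: finite_idx tspace_def if_distrib cong: if_cong)

lemma tpow_in_tspace [intro, simp]: "D \<in> tspace N \<Longrightarrow> D [^] n \<in> tspace N"
  by (induct n) auto

lemma tpow_one [simp]: "D \<in> tspace N \<Longrightarrow> D [^] Suc 0 = D"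
  by simp

lemma tpow_Suc_right: "D \<in> tspace N \<Longrightarrow> D [^] Suc n = D [^] n \<odot> D"
proof (induct n)
  case (Suc n)
  then have "D [^] Suc (Suc n) = D \<odot> (D [^] n \<odot> D)" by simp
  then show ?case by (simp add: eprod_assoc)
qed simp

lemma tpow_add: "D \<in> tspace N \<Longrightarrow> D [^] (m + n) = D [^] m \<odot> D [^] n"
  by (induct m) (auto simp: eprod_assoc)

declare tpow.simps(2) [simp del]

lemma tpow_commute: "D \<in> tspace N \<Longrightarrow> D \<odot> D [^] n = D [^] n \<odot> D"
  by (simp flip: tpow.simps(2) tpow_Suc_right)

lemma commute_tpow:
  assumes "A \<in> tspace N" "B \<in> tspace N" "A \<odot> B = B \<odot> A"
  shows "A \<odot> B [^] n = B [^] n \<odot> A"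
proof (induct n)
  case (Suc n)
  have "A \<odot> B [^] Suc n = B \<odot> (A \<odot> B [^] n)"
    using assms(3) by (simp add: tpow.simps(2) flip: eprod_assoc)
  also have "\<dots> = B [^] Suc n \<odot> A" using Suc by (simp add: tpow.simps(2) eprod_assoc)
  finally show ?case .
qed (use assms in simp)

lemma commute_tpow_tpow:
  assumes "A \<in> tspace N" "B \<in> tspace N" "A \<odot> B = B \<odot> A"
  shows "A [^] m \<odot> B [^] n = B [^] n \<odot> A [^] m"
  using commute_tpow[of "A [^] m" B n] commute_tpow[of B A m] assms by simp

lemma tstar_tstar [simp]: "tstar (tstar A) = A"
  by (simp add: tstar_def)

lemma tstar_eprod: "tstar (A \<odot> B) = tstar B \<odot> tstar A"
  by (simp add: tstar_def eprod_def fun_eq_iff mult.commute)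

lemma tstar_in_tspace [intro, simp]: "A \<in> tspace N \<Longrightarrow> tstar A \<in> tspace N"
  by (simp add: tstar_def tspace_def) blast

lemma tstar_tpow: "D \<in> tspace N \<Longrightarrow> tstar (D [^] n) = tstar D [^] n"
proof (induct n)
  case 0
  show ?case by (auto simp: tstar_def tid_eq fun_eq_iff)
next
  case (Suc n)
  then have "tstar (D [^] Suc n) = tstar D \<odot> tstar D [^] n"
    by (simp add: tpow_Suc_right tstar_eprod)
  then show ?case by (simp add: tpow.simps(2))
qed

lemma eprod_zero_right [simp]: "A \<odot> 0 = 0"
  by (simp add: eprod_def fun_eq_iff)

lemma diff_in_tspace [intro, simp]: "A \<in> tspace N \<Longrightarrow> B \<in> tspace N \<Longrightarrow> A - B \<in> tspace N"
  by (simp add: tspace_def)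

lemma eprod_diff_left: "A \<odot> (B - C) = A \<odot> B - A \<odot> C"
  by (simp add: eprod_def fun_eq_iff algebra_simps sum_subtractf)

lemma gram_eq_zero_imp_eq_zero:
  assumes "A \<in> tspace N" and "tstar A \<odot> A = 0"
  shows "A = 0"
proof -
  have "A i j = 0" for i j
  proof (cases "i \<in> idx N \<and> j \<in> idx N")
    case True
    have norm_sq: "cnj z * z = complex_of_real ((cmod z)\<^sup>2)" for z
      by (metis complex_norm_square mult.commute)
    have "(\<Sum>l\<in>idx N. cnj (A l j) * A l j) = 0"
      using fun_cong[OF fun_cong[OF assms(2), of j], of j] by (simp add: eprod_def tstar_def)
    then have "complex_of_real (\<Sum>l\<in>idx N. (cmod (A l j))\<^sup>2) = 0"
      by (simp only: norm_sq flip: of_real_sum)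
    then have "(\<Sum>l\<in>idx N. (cmod (A l j))\<^sup>2) = 0"
      by (simp only: of_real_eq_0_iff)
    then show ?thesis
      using True by (subst (asm) sum_nonneg_eq_0_iff) (auto simp: finite_idx)
  qed (use assms(1) in \<open>auto simp: tspace_def\<close>)
  then show ?thesis by (simp add: fun_eq_iff)
qed

lemma hermitian_tpow_annihilates:
  assumes B: "B \<in> tspace N" "tstar B = B" and M: "M \<in> tspace N"
    and zero: "B [^] Suc j \<odot> M = 0"
  shows "B \<odot> M = 0"
  using zero
proof (induct j)
  case (Suc j)
  let ?C = "B [^] Suc j \<odot> M"
  have sq: "B [^] Suc j \<odot> B [^] Suc j = B [^] j \<odot> B [^] Suc (Suc j)"
    using tpow_add[OF B(1), of "Suc j" "Suc j"] tpow_add[OF B(1), of j "Suc (Suc j)"] by simp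
  have "tstar ?C \<odot> ?C = tstar M \<odot> (B [^] Suc j \<odot> B [^] Suc j \<odot> M)"
    using B by (simp add: tstar_eprod tstar_tpow eprod_assoc)
  also have "\<dots> = tstar M \<odot> (B [^] j \<odot> (B [^] Suc (Suc j) \<odot> M))"
    by (simp only: sq) (simp only: eprod_assoc)
  also have "\<dots> = 0" by (simp only: Suc.prems eprod_zero_right)
  finally have "?C = 0" using gram_eq_zero_imp_eq_zero[of ?C] M B by simp
  then show ?case using Suc.hyps by simp
qed (use B in simp)

section \<open>Drazin inverses\<close>

definition is_drazin :: "tensor \<Rightarrow> nat \<Rightarrow> tensor \<Rightarrow> bool" where
  "is_drazin D k Y \<longleftrightarrow> Y \<in> tspace N \<and> Y \<odot> D [^] Suc k = D [^] k \<and> Y \<odot> D \<odot> Y = Y \<and> D \<odot> Y = Y \<odot> D"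

lemma drazin_tpow_left:
  assumes D: "D \<in> tspace N" and Y: "is_drazin D k Y"
  shows "Y [^] Suc j \<odot> D [^] j = Y"
proof (induct j)
  case (Suc j)
  have YT: "Y \<in> tspace N" and YYD: "Y \<odot> (Y \<odot> D) = Y"
    using Y by (auto simp: is_drazin_def eprod_assoc)
  have "Y [^] Suc (Suc j) \<odot> D [^] Suc j = Y [^] j \<odot> (Y \<odot> (Y \<odot> D)) \<odot> D [^] j"
    using YT by (simp add: tpow_Suc_right tpow.simps(2)[of N D] eprod_assoc)
  also have "\<dots> = Y" using YYD Suc YT by (simp add: tpow_Suc_right)
  finally show ?case .
qed (use Y in \<open>simp add: is_drazin_def\<close>)

lemma drazin_tpow_right:
  assumes D: "D \<in> tspace N" and Y: "is_drazin D k Y"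
  shows "D [^] j \<odot> Y [^] Suc j = Y"
proof (induct j)
  case (Suc j)
  have DYY: "D \<odot> (Y \<odot> Y) = Y"
    using Y by (auto simp: is_drazin_def) (metis eprod_assoc)
  have "D [^] Suc j \<odot> Y [^] Suc (Suc j) = D [^] j \<odot> (D \<odot> (Y \<odot> Y)) \<odot> Y [^] j"
    using D by (simp add: tpow_Suc_right[of D] tpow.simps(2)[of N Y] eprod_assoc)
  also have "\<dots> = Y" unfolding DYY using Suc by (simp add: tpow.simps(2)[of N Y] eprod_assoc)
  finally show ?case .
qed (use Y in \<open>simp add: is_drazin_def\<close>)

lemma drazin_unique:
  assumes D: "D \<in> tspace N" and Y: "is_drazin D k Y" and Z: "is_drazin D k Z"
  shows "Y = Z"
proof -
  have ZT: "Z \<in> tspace N" using Z by (simp add: is_drazin_def)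
  have Dk_Z: "D [^] k = D [^] Suc k \<odot> Z"
    using Z commute_tpow[OF ZT D, of "Suc k"] by (simp add: is_drazin_def)
  have Dk_Y: "D [^] k = Y \<odot> D [^] Suc k"
    using Y by (simp add: is_drazin_def)
  have "Y = Y [^] Suc k \<odot> D [^] k" using drazin_tpow_left[OF D Y] by simp
  also have "\<dots> = Y [^] Suc k \<odot> D [^] k \<odot> D \<odot> Z"
    by (subst (1) Dk_Z) (simp add: tpow_Suc_right[OF D] eprod_assoc)
  also have "\<dots> = Y \<odot> D \<odot> Z" using drazin_tpow_left[OF D Y] by simp
  also have "\<dots> = Y \<odot> D \<odot> (D [^] k \<odot> Z [^] Suc k)"
    using drazin_tpow_right[OF D Z] by simp
  also have "\<dots> = Y \<odot> D [^] Suc k \<odot> Z [^] Suc k" by (simp add: tpow.simps(2) eprod_assoc)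
  also have "\<dots> = Z" using drazin_tpow_right[OF D Z] Dk_Y[symmetric] by simp
  finally show ?thesis .
qed

lemma tpow_factor_iterate:
  assumes D: "D \<in> tspace N" and X: "D [^] r = D [^] Suc r \<odot> X"
  shows "D [^] r = D [^] (r + j) \<odot> X [^] j"
proof (induct j)
  case (Suc j)
  have "D [^] (r + Suc j) = D [^] j \<odot> D [^] Suc r"
    using tpow_add[OF D, of j "Suc r"] by (simp add: add.commute)
  then have "D [^] (r + Suc j) \<odot> X [^] Suc j = D [^] j \<odot> (D [^] Suc r \<odot> X) \<odot> X [^] j"
    by (simp add: tpow.simps(2) eprod_assoc)
  also have "\<dots> = D [^] (r + j) \<odot> X [^] j"
    using X tpow_add[OF D, of j r] by (simp add: add.commute)
  finally show ?case using Suc by simp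
qed (use D in simp)

text \<open>On \<open>\<R>(D\<^sup>r)\<close> the factor \<open>X\<close> inverts \<open>D\<close>, and \<open>D\<^sup>r X\<^sup>r\<close> projects onto \<open>\<R>(D\<^sup>r)\<close>.\<close>

lemma drazin_of_commuting_factor:
  assumes D: "D \<in> tspace N" and X: "X \<in> tspace N" and comm: "X \<odot> D = D \<odot> X"
    and factor: "D [^] r = D [^] Suc r \<odot> X"
  shows "is_drazin D r (D [^] r \<odot> X [^] Suc r)"
proof -
  let ?Y = "D [^] r \<odot> X [^] Suc r"
  have XD: "X [^] m \<odot> D [^] n = D [^] n \<odot> X [^] m" for m n
    using commute_tpow_tpow[OF X D comm] .
  have DX: "X [^] m \<odot> D = D \<odot> X [^] m" for m
    using XD[of m 1] D by simp
  have "D [^] r = D [^] r \<odot> D [^] Suc r \<odot> X [^] Suc r"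
    using tpow_factor_iterate[OF D factor, of "Suc r"] by (simp only: tpow_add[OF D])
  then have absorb: "D [^] r \<odot> (D [^] Suc r \<odot> X [^] Suc r) = D [^] r"
    by (simp add: eprod_assoc)
  have 1: "?Y \<odot> D [^] Suc r = D [^] r"
    by (simp add: eprod_assoc XD absorb)
  have "?Y \<odot> D = D [^] r \<odot> (D \<odot> X [^] Suc r)"
    by (simp add: eprod_assoc DX)
  also have "\<dots> = D \<odot> ?Y"
    using tpow_commute[OF D, of r] by (simp flip: eprod_assoc)
  finally have 2: "D \<odot> ?Y = ?Y \<odot> D" by simp
  have "?Y \<odot> D \<odot> ?Y = D [^] r \<odot> (X [^] Suc r \<odot> D [^] Suc r) \<odot> X [^] Suc r"
    by (simp add: eprod_assoc tpow.simps(2))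
  also have "\<dots> = D [^] r \<odot> (D [^] Suc r \<odot> X [^] Suc r) \<odot> X [^] Suc r"
    by (simp only: XD)
  finally have 3: "?Y \<odot> D \<odot> ?Y = ?Y" by (simp only: absorb)
  show ?thesis using 1 2 3 D X by (simp add: is_drazin_def)
qed

lemma drazin_lower_level:
  assumes D: "D \<in> tspace N" and Y: "is_drazin D r Y" and "k \<le> r"
    and U: "D [^] k = D [^] Suc k \<odot> U"
  shows "is_drazin D k Y"
proof -
  have "D [^] k = D [^] (k + (r - k)) \<odot> U [^] (r - k)"
    by (rule tpow_factor_iterate[OF D U])
  then have Dk: "D [^] k = D [^] r \<odot> U [^] (r - k)" using \<open>k \<le> r\<close> by simp
  have "D [^] Suc k = D [^] Suc r \<odot> U [^] (r - k)"
    by (simp add: tpow.simps(2) Dk eprod_assoc)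
  then have "Y \<odot> D [^] Suc k = Y \<odot> D [^] Suc r \<odot> U [^] (r - k)"
    by (simp add: eprod_assoc)
  then show ?thesis using Y Dk by (simp add: is_drazin_def)
qed

lemma drazin_tstar:
  assumes D: "D \<in> tspace N" and Y: "is_drazin D k Y"
  shows "is_drazin (tstar D) k (tstar Y)"
proof -
  have YT: "Y \<in> tspace N" and Y_Dk: "Y \<odot> D [^] Suc k = D [^] k"
    and YDY: "Y \<odot> D \<odot> Y = Y" and comm: "D \<odot> Y = Y \<odot> D"
    using Y by (auto simp: is_drazin_def)
  have "tstar Y \<odot> tstar D [^] Suc k = tstar (D [^] Suc k \<odot> Y)"
    using D by (simp add: tstar_eprod tstar_tpow)
  also have "\<dots> = tstar D [^] k"
    using commute_tpow[OF YT D comm[symmetric]] Y_Dk D by (simp add: tstar_tpow)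
  finally have 1: "tstar Y \<odot> tstar D [^] Suc k = tstar D [^] k" .
  have 2: "tstar Y \<odot> tstar D \<odot> tstar Y = tstar Y"
    using arg_cong[OF YDY, of tstar] by (simp add: tstar_eprod eprod_assoc)
  have 3: "tstar D \<odot> tstar Y = tstar Y \<odot> tstar D"
    using arg_cong[OF comm, of tstar] by (simp add: tstar_eprod)
  show ?thesis using 1 2 3 YT by (simp add: is_drazin_def)
qed

section \<open>Moore--Penrose inverses\<close>

definition is_mpinv :: "tensor \<Rightarrow> tensor \<Rightarrow> bool" where
  "is_mpinv D P \<longleftrightarrow> P \<in> tspace N \<and> D \<odot> P \<odot> D = D \<and> P \<odot> D \<odot> P = P
     \<and> tstar (D \<odot> P) = D \<odot> P \<and> tstar (P \<odot> D) = P \<odot> D"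

lemma mpinv_unique:
  assumes P: "is_mpinv D P" and Q: "is_mpinv D Q"
  shows "P = Q"
proof -
  have P1: "D \<odot> P \<odot> D = D" and P2: "P \<odot> D \<odot> P = P"
    and P3: "tstar (D \<odot> P) = D \<odot> P" and P4: "tstar (P \<odot> D) = P \<odot> D"
    using P by (auto simp: is_mpinv_def)
  have Q1: "D \<odot> Q \<odot> D = D" and Q2: "Q \<odot> D \<odot> Q = Q"
    and Q3: "tstar (D \<odot> Q) = D \<odot> Q" and Q4: "tstar (Q \<odot> D) = Q \<odot> D"
    using Q by (auto simp: is_mpinv_def)
  have DP_DQ: "D \<odot> P = D \<odot> Q"
  proof -
    have "D \<odot> P = D \<odot> Q \<odot> (D \<odot> P)" by (simp add: Q1 flip: eprod_assoc)
    then have "tstar (D \<odot> P) = tstar (D \<odot> Q \<odot> (D \<odot> P))" by (rule arg_cong)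
    then have "D \<odot> P = D \<odot> P \<odot> (D \<odot> Q)" by (simp only: tstar_eprod[of "D \<odot> Q" "D \<odot> P"] P3 Q3)
    then show ?thesis by (simp add: P1 flip: eprod_assoc)
  qed
  have PD_QD: "P \<odot> D = Q \<odot> D"
  proof -
    have "P \<odot> D = P \<odot> (D \<odot> Q \<odot> D)" using Q1 by simp
    also have "\<dots> = P \<odot> D \<odot> (Q \<odot> D)" by (simp add: eprod_assoc)
    finally have "P \<odot> D = P \<odot> D \<odot> (Q \<odot> D)" .
    then have "tstar (P \<odot> D) = tstar (P \<odot> D \<odot> (Q \<odot> D))" by (rule arg_cong)
    then have "P \<odot> D = Q \<odot> D \<odot> (P \<odot> D)" by (simp only: tstar_eprod[of "P \<odot> D" "Q \<odot> D"] P4 Q4)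
    then show ?thesis using P1 by (simp add: eprod_assoc)
  qed
  have "P = P \<odot> D \<odot> P" using P2 by simp
  also have "\<dots> = Q \<odot> D \<odot> Q" by (simp only: PD_QD eprod_assoc DP_DQ)
  also have "\<dots> = Q" using Q2 .
  finally show ?thesis .
qed

text \<open>The Drazin inverse \<open>Y\<close> of the Hermitian \<open>B = D\<^sup>* D\<close> is Hermitian by uniqueness, and
  \<open>B\<^sup>r (I - Y B) = 0\<close> collapses to \<open>D (I - Y B) = 0\<close> by positivity.\<close>

lemma mpinv_of_gram_drazin:
  assumes D: "D \<in> tspace N" and Y: "is_drazin (tstar D \<odot> D) r Y"
  shows "is_mpinv D (Y \<odot> tstar D)"
proof -
  define B where "B = tstar D \<odot> D"
  have BT: "B \<in> tspace N" and B_herm: "tstar B = B" using D by (auto simp: B_def tstar_eprod)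
  have YB: "is_drazin B r Y" using Y by (simp add: B_def)
  then have YT: "Y \<in> tspace N" and Y_Br: "Y \<odot> B [^] Suc r = B [^] r"
    and YBY: "Y \<odot> B \<odot> Y = Y" and Y_comm: "B \<odot> Y = Y \<odot> B"
    by (auto simp: is_drazin_def)
  have Y_herm: "tstar Y = Y"
    using drazin_unique[OF BT _ YB] drazin_tstar[OF BT YB] B_herm by metis
  define M where "M = tid N - Y \<odot> B"
  have MT: "M \<in> tspace N" using YT BT by (simp add: M_def)
  have "B [^] r \<odot> (Y \<odot> B) = Y \<odot> B [^] Suc r"
    using commute_tpow[OF YT BT Y_comm[symmetric], of r] tpow_Suc_right[OF BT, of r] by (simp flip: eprod_assoc)
  then have Br_M: "B [^] r \<odot> M = 0"
    using Y_Br BT by (simp add: M_def eprod_diff_left)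
  have "B \<odot> M = 0"
  proof (cases r)
    case 0
    then show ?thesis using Br_M MT by simp
  next
    case (Suc j)
    then show ?thesis using hermitian_tpow_annihilates[OF BT B_herm MT] Br_M by simp
  qed
  then have "tstar (D \<odot> M) \<odot> (D \<odot> M) = 0" by (simp add: B_def tstar_eprod eprod_assoc)
  then have "D \<odot> M = 0" using gram_eq_zero_imp_eq_zero[of "D \<odot> M"] D MT by simp
  then have 1: "D \<odot> (Y \<odot> tstar D) \<odot> D = D"
    using D by (simp add: M_def eprod_diff_left eprod_assoc B_def)
  have 2: "Y \<odot> tstar D \<odot> D \<odot> (Y \<odot> tstar D) = Y \<odot> tstar D"
    using YBY by (simp add: B_def flip: eprod_assoc)
  have 3: "tstar (D \<odot> (Y \<odot> tstar D)) = D \<odot> (Y \<odot> tstar D)"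
    using Y_herm by (simp add: tstar_eprod eprod_assoc)
  have 4: "tstar (Y \<odot> tstar D \<odot> D) = Y \<odot> tstar D \<odot> D"
    using Y_herm Y_comm by (simp add: tstar_eprod eprod_assoc B_def)
  show ?thesis using 1 2 3 4 YT D by (simp add: is_mpinv_def)
qed

lemma eprod_tscale_right: "A \<odot> tscale c B = tscale c (A \<odot> B)"
  by (simp add: tscale_def eprod_def fun_eq_iff sum_distrib_left algebra_simps)

lemma eprod_tscale_left: "tscale c A \<odot> B = tscale c (A \<odot> B)"
  by (simp add: tscale_def eprod_def fun_eq_iff sum_distrib_left algebra_simps)

lemma eprod_sum_right: "A \<odot> sum f F = (\<Sum>x\<in>F. A \<odot> f x)"
  by (induct F rule: infinite_finite_induct)
     (simp_all add: eprod_def fun_eq_iff sum.distrib distrib_left)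

lemma eprod_sum_left: "sum f F \<odot> A = (\<Sum>x\<in>F. f x \<odot> A)"
  by (induct F rule: infinite_finite_induct)
     (simp_all add: eprod_def fun_eq_iff sum.distrib distrib_right)

lemma tscale_in_tspace [intro, simp]: "A \<in> tspace N \<Longrightarrow> tscale c A \<in> tspace N"
  by (simp add: tscale_def tspace_def)

lemma sum_in_tspace [intro]: "(\<And>x. x \<in> F \<Longrightarrow> f x \<in> tspace N) \<Longrightarrow> sum f F \<in> tspace N"
  by (induct F rule: infinite_finite_induct) (auto simp: tspace_def)

lemma tspace_subset_span_units:
  "tspace N \<subseteq> tensor_vs.span ((\<lambda>(a, b). unit_tensor a b) ` (idx N \<times> idx N))"
proof
  fix M assume M: "M \<in> tspace N"
  have "M = (\<Sum>p\<in>idx N \<times> idx N. tscale (M (fst p) (snd p)) (unit_tensor (fst p) (snd p)))"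
  proof (intro ext)
    fix i j
    have "(\<Sum>p\<in>idx N \<times> idx N. tscale (M (fst p) (snd p)) (unit_tensor (fst p) (snd p))) i j
        = (\<Sum>p\<in>idx N \<times> idx N. if p = (i, j) then M i j else 0)"
      by (simp add: sum_fun_apply tscale_def unit_tensor_def) (intro sum.cong refl, auto)
    also have "\<dots> = M i j" using M by (auto simp: finite_idx tspace_def)
    finally show "M i j = (\<Sum>p\<in>idx N \<times> idx N. tscale (M (fst p) (snd p)) (unit_tensor (fst p) (snd p))) i j"
      by simp
  qed
  also have "\<dots> \<in> tensor_vs.span ((\<lambda>(a, b). unit_tensor a b) ` (idx N \<times> idx N))"
    by (intro tensor_vs.span_sum tensor_vs.span_scale tensor_vs.span_base) auto
  finally show "M \<in> \<dots>" .
qed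

text \<open>Dividing a linear relation among the powers of \<open>D\<close> by its lowest nonzero coefficient
  \<open>c\<^sub>r\<close> expresses \<open>D\<^sup>r\<close> as \<open>D\<^sup>r\<^sup>+\<^sup>1\<close> times a polynomial in \<open>D\<close>.\<close>

lemma tpow_commuting_factor:
  assumes D: "D \<in> tspace N"
  obtains r X where "X \<in> tspace N" "X \<odot> D = D \<odot> X" "D [^] r = D [^] Suc r \<odot> X"
proof -
  have "range (tpow N D) \<subseteq> tensor_vs.span ((\<lambda>(a, b). unit_tensor a b) ` (idx N \<times> idx N))"
    using tspace_subset_span_units D by auto
  then obtain F c where F: "finite F" and rel: "(\<Sum>j\<in>F. tscale (c j) (D [^] j)) = 0"
    and nonzero: "\<exists>j\<in>F. c j \<noteq> 0"
    by (rule tensor_vs.sequence_linear_relation) (simp add: finite_idx)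
  define r where "r = Min {j \<in> F. c j \<noteq> 0}"
  have r: "r \<in> F" "c r \<noteq> 0" and r_min: "\<And>j. j \<in> F \<Longrightarrow> c j \<noteq> 0 \<Longrightarrow> r \<le> j"
    using Min_in[of "{j \<in> F. c j \<noteq> 0}"] F nonzero by (auto simp: r_def)
  define G where "G = F - {r}"
  define X where "X = tscale (- 1 / c r) (\<Sum>j\<in>G. tscale (c j) (D [^] (j - Suc r)))"
  have "X \<in> tspace N" unfolding X_def using D by (intro tscale_in_tspace sum_in_tspace) auto
  moreover have "X \<odot> D = D \<odot> X"
    unfolding X_def using D by (simp only: eprod_tscale_left eprod_tscale_right
        eprod_sum_left eprod_sum_right tpow_commute)
  moreover have "D [^] r = D [^] Suc r \<odot> X"
  proof -
    have shift: "tscale (c j) (D [^] Suc r \<odot> D [^] (j - Suc r)) = tscale (c j) (D [^] j)"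
      if "j \<in> G" for j
    proof (cases "c j = 0")
      case False
      then have "Suc r + (j - Suc r) = j" using r_min[of j] that by (auto simp: G_def)
      then show ?thesis using tpow_add[OF D, of "Suc r" "j - Suc r"] by simp
    qed (simp add: tscale_def)
    have "tscale (c r) (D [^] r) + (\<Sum>j\<in>G. tscale (c j) (D [^] j)) = 0"
      using rel sum.remove[OF F r(1), of "\<lambda>j. tscale (c j) (D [^] j)"] by (simp add: G_def)
    then have rest: "(\<Sum>j\<in>G. tscale (c j) (D [^] j)) = - tscale (c r) (D [^] r)"
      by (simp add: eq_neg_iff_add_eq_0 add.commute)
    have "D [^] Suc r \<odot> X = tscale (- 1 / c r) (\<Sum>j\<in>G. tscale (c j) (D [^] j))"
      unfolding X_def by (simp only: eprod_tscale_right eprod_sum_right shift cong: sum.cong)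
    also have "\<dots> = D [^] r" using r(2) by (simp only: rest) (simp add: tscale_def fun_eq_iff)
    finally show ?thesis by simp
  qed
  ultimately show ?thesis by (rule that)
qed

section \<open>Range spaces\<close>

lemma eprodv_eprod: "eprodv N (A \<odot> B) E = eprodv N A (eprodv N B E)"
  unfolding eprodv_def eprod_def fun_eq_iff
  by (simp add: sum_distrib_left sum_distrib_right mult.assoc, subst sum.swap, simp)

lemma eprodv_outside_idx: "A \<in> tspace N \<Longrightarrow> i \<notin> idx N \<Longrightarrow> eprodv N A E i = 0"
  by (simp add: eprodv_def tspace_def)

lemma trange_eprod_subset: "C \<in> tspace N \<Longrightarrow> trange N (B \<odot> C) \<subseteq> trange N B"
  unfolding trange_def by (auto simp: eprodv_eprod eprodv_outside_idx)

lemma trange_subset_imp_factor: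
  assumes A: "A \<in> tspace N" and sub: "trange N A \<subseteq> trange N B"
  obtains U where "U \<in> tspace N" "A = B \<odot> U"
proof -
  have "\<exists>E. (\<forall>i. i \<notin> idx N \<longrightarrow> E i = 0) \<and> (\<lambda>i. A i j) = eprodv N B E" if j: "j \<in> idx N" for j
  proof -
    define e where "e = (\<lambda>l. if l = j then 1 else (0::complex))"
    have "eprodv N A e = (\<lambda>i. A i j)"
      using j by (simp add: eprodv_def e_def finite_idx if_distrib[of "\<lambda>x. _ * x"] cong: if_cong)
    moreover have "\<forall>i. i \<notin> idx N \<longrightarrow> e i = 0" using j by (auto simp: e_def)
    ultimately have "(\<lambda>i. A i j) \<in> trange N A" unfolding trange_def by (auto intro!: exI[of _ e])
    then show ?thesis using sub unfolding trange_def by blast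
  qed
  then obtain f where f: "\<And>j. j \<in> idx N \<Longrightarrow> (\<forall>i. i \<notin> idx N \<longrightarrow> f j i = 0)"
    "\<And>j. j \<in> idx N \<Longrightarrow> (\<lambda>i. A i j) = eprodv N B (f j)"
    by metis
  define U where "U = (\<lambda>l j. if j \<in> idx N then f j l else 0)"
  have "U \<in> tspace N" using f(1) by (auto simp: U_def tspace_def)
  moreover have "A = B \<odot> U"
  proof (intro ext)
    fix i j
    show "A i j = (B \<odot> U) i j"
    proof (cases "j \<in> idx N")
      case True
      then show ?thesis using fun_cong[OF f(2)[OF True], of i]
        by (simp add: U_def eprod_def eprodv_def)
    qed (use A in \<open>simp add: U_def eprod_def tspace_def\<close>)
  qed
  ultimately show ?thesis by (rule that)
qed

lemma trange_subspace: "vector_vs.subspace (trange N A)"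
proof (rule vector_vs.subspaceI)
  show "0 \<in> trange N A"
    unfolding trange_def by (rule CollectI, rule exI[of _ 0]) (simp add: eprodv_def fun_eq_iff)
next
  fix x y assume "x \<in> trange N A" "y \<in> trange N A"
  then obtain E F where "\<forall>i. i \<notin> idx N \<longrightarrow> E i = 0" "\<forall>i. i \<notin> idx N \<longrightarrow> F i = 0"
    and "x = eprodv N A E" "y = eprodv N A F"
    by (auto simp: trange_def)
  then show "x + y \<in> trange N A" unfolding trange_def
    by (intro CollectI exI[of _ "E + F"]) (simp add: eprodv_def fun_eq_iff algebra_simps sum.distrib)
next
  fix c x assume "x \<in> trange N A"
  then obtain E where "\<forall>i. i \<notin> idx N \<longrightarrow> E i = 0" "x = eprodv N A E"
    by (auto simp: trange_def)
  then show "(\<lambda>i. c * x i) \<in> trange N A" unfolding trange_def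
    by (intro CollectI exI[of _ "\<lambda>i. c * E i"])
       (simp add: eprodv_def fun_eq_iff algebra_simps sum_distrib_left)
qed

lemma trange_subset_span_columns: "trange N A \<subseteq> vector_vs.span ((\<lambda>j i. A i j) ` idx N)"
proof
  fix v assume "v \<in> trange N A"
  then obtain E where "v = eprodv N A E" by (auto simp: trange_def)
  then have "v = (\<Sum>j\<in>idx N. (\<lambda>i. E j * A i j))"
    by (simp add: eprodv_def fun_eq_iff sum_fun_apply mult.commute)
  also have "\<dots> \<in> vector_vs.span ((\<lambda>j i. A i j) ` idx N)"
    by (intro vector_vs.span_sum vector_vs.span_scale vector_vs.span_base) auto
  finally show "v \<in> vector_vs.span ((\<lambda>j i. A i j) ` idx N)" .
qed

lemma tind_le_and_factor:
  assumes D: "D \<in> tspace N" and X: "X \<in> tspace N" and factor: "D [^] r = D [^] Suc r \<odot> X"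
  shows "tind N D \<le> r" and "\<exists>U\<in>tspace N. D [^] tind N D = D [^] Suc (tind N D) \<odot> U"
proof -
  have shrink: "trange N (D [^] Suc n) \<subseteq> trange N (D [^] n)" for n
    using trange_eprod_subset[OF D, of "D [^] n"] by (simp add: tpow_Suc_right[OF D])
  have "trange N (D [^] r) = trange N (D [^] Suc r)"
    using shrink[of r] trange_eprod_subset[OF X, of "D [^] Suc r"] factor by auto
  then have stable: "cdim (trange N (D [^] r)) = cdim (trange N (D [^] Suc r))" by simp
  show "tind N D \<le> r" unfolding tind_def using stable by (rule Least_le)
  let ?k = "tind N D"
  have "cdim (trange N (D [^] ?k)) = cdim (trange N (D [^] Suc ?k))"
    unfolding tind_def using stable by (rule LeastI)
  then have "trange N (D [^] ?k) \<subseteq> trange N (D [^] Suc ?k)"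
    using vector_vs.subspace_subset_of_dim_le[OF shrink trange_subspace
        trange_subset_span_columns] by (simp add: cdim_def finite_idx)
  then show "\<exists>U\<in>tspace N. D [^] ?k = D [^] Suc ?k \<odot> U"
    using trange_subset_imp_factor[of "D [^] ?k" "D [^] Suc ?k"] D by blast
qed

lemma is_drazin_drazin:
  assumes D: "D \<in> tspace N"
  shows "is_drazin D (tind N D) (drazin N D)"
proof -
  obtain r X where X: "X \<in> tspace N" "X \<odot> D = D \<odot> X" "D [^] r = D [^] Suc r \<odot> X"
    using tpow_commuting_factor[OF D] by blast
  obtain U where "D [^] tind N D = D [^] Suc (tind N D) \<odot> U"
    using tind_le_and_factor(2)[OF D X(1,3)] by blast
  then have "is_drazin D (tind N D) (D [^] r \<odot> X [^] Suc r)"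
    using drazin_lower_level[OF D drazin_of_commuting_factor[OF D X] tind_le_and_factor(1)[OF D X(1,3)]]
    by blast
  then have "\<exists>!Y. is_drazin D (tind N D) Y" using drazin_unique[OF D] by blast
  then show ?thesis unfolding drazin_def is_drazin_def by (rule theI')
qed

lemma is_mpinv_mpinv:
  assumes D: "D \<in> tspace N"
  shows "is_mpinv D (mpinv N D)"
proof -
  define B where "B = tstar D \<odot> D"
  have B: "B \<in> tspace N" using D by (simp add: B_def)
  obtain r X where "X \<in> tspace N" "X \<odot> B = B \<odot> X" "B [^] r = B [^] Suc r \<odot> X"
    using tpow_commuting_factor[OF B] by blast
  then have "is_drazin B r (B [^] r \<odot> X [^] Suc r)"
    by (rule drazin_of_commuting_factor[OF B])
  then have "is_mpinv D (B [^] r \<odot> X [^] Suc r \<odot> tstar D)"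
    using mpinv_of_gram_drazin[OF D] by (simp add: B_def)
  then have "\<exists>!P. is_mpinv D P" using mpinv_unique by blast
  then show ?thesis unfolding mpinv_def is_mpinv_def by (rule theI')
qed

lemma eprod_left_fixed_iff:
  assumes "A = C \<odot> U" and "C = A \<odot> V"
  shows "M \<odot> A = A \<longleftrightarrow> M \<odot> C = C"
  using assms by (metis eprod_assoc)

lemma eprod_right_fixed_iff:
  assumes "A = U \<odot> C" and "C = V \<odot> A"
  shows "A \<odot> M = A \<longleftrightarrow> C \<odot> M = C"
  using assms by (metis eprod_assoc)

lemma left_fixed_iff_trange_subset:
  assumes "D \<in> tspace N" "C \<in> tspace N" and "P \<odot> D \<odot> P = P"
  shows "P \<odot> D \<odot> C = C \<longleftrightarrow> trange N C \<subseteq> trange N P"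
proof
  assume "P \<odot> D \<odot> C = C"
  then show "trange N C \<subseteq> trange N P"
    using trange_eprod_subset[of "D \<odot> C" P] assms(1,2) by (simp add: eprod_assoc)
next
  assume "trange N C \<subseteq> trange N P"
  then obtain W where "C = P \<odot> W" using trange_subset_imp_factor assms(2) by metis
  then show "P \<odot> D \<odot> C = C" using assms(3) by (metis eprod_assoc)
qed

lemma drazin_projector_factors:
  assumes D: "D \<in> tspace N" and Y: "is_drazin D k Y"
  shows "Y \<odot> D = D [^] k \<odot> (D \<odot> Y [^] Suc k)" and "D [^] k = Y \<odot> D \<odot> D [^] k"
    and "Y \<odot> D = Y [^] Suc k \<odot> D \<odot> D [^] k" and "D [^] k = D [^] k \<odot> (Y \<odot> D)"
proof -
  have YT: "Y \<in> tspace N" and Y_Dk: "Y \<odot> D [^] Suc k = D [^] k" and comm: "D \<odot> Y = Y \<odot> D"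
    using Y by (auto simp: is_drazin_def)
  show "Y \<odot> D = D [^] k \<odot> (D \<odot> Y [^] Suc k)"
    using comm drazin_tpow_right[OF D Y, of k] tpow_commute[OF D, of k] by (metis eprod_assoc)
  show "D [^] k = Y \<odot> D \<odot> D [^] k"
    using Y_Dk by (simp add: eprod_assoc tpow.simps(2))
  show "Y \<odot> D = Y [^] Suc k \<odot> D \<odot> D [^] k"
    using drazin_tpow_left[OF D Y, of k] tpow_commute[OF D, of k] by (metis eprod_assoc)
  have "D [^] k \<odot> (Y \<odot> D) = Y \<odot> D [^] Suc k"
    using comm commute_tpow[OF YT D comm[symmetric], of "Suc k"] tpow_Suc_right[OF D, of k]
    by (metis eprod_assoc)
  then show "D [^] k = D [^] k \<odot> (Y \<odot> D)" using Y_Dk by simp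
qed

lemma composite_inverses_iff:
  assumes D: "D \<in> tspace N"
  shows "(dmp N D \<odot> D = cmp N D \<odot> D \<longleftrightarrow> trange N (D [^] tind N D) \<subseteq> trange N (mpinv N D))
       \<and> (D \<odot> mpd N D = D \<odot> cmp N D \<longleftrightarrow> D [^] tind N D = D [^] Suc (tind N D) \<odot> mpinv N D)"
proof -
  define k Y P where "k = tind N D" and "Y = drazin N D" and "P = mpinv N D"
  have Y: "is_drazin D k Y" using is_drazin_drazin[OF D] by (simp add: k_def Y_def)
  have "is_mpinv D P" using is_mpinv_mpinv[OF D] by (simp add: P_def)
  then have DPD: "D \<odot> P \<odot> D = D" and PDP: "P \<odot> D \<odot> P = P"
    by (auto simp: is_mpinv_def)
  have comm: "D \<odot> Y = Y \<odot> D" using Y by (simp add: is_drazin_def)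
  have "dmp N D \<odot> D = Y \<odot> D" and "cmp N D \<odot> D = P \<odot> D \<odot> (Y \<odot> D)"
    using DPD by (simp_all add: dmp_def cmp_def Y_def P_def eprod_assoc)
  moreover have "D \<odot> mpd N D = Y \<odot> D" and "D \<odot> cmp N D = Y \<odot> D \<odot> (D \<odot> P)"
    using DPD comm by (simp_all add: mpd_def cmp_def Y_def P_def flip: eprod_assoc)
  moreover have "Y \<odot> D = P \<odot> D \<odot> (Y \<odot> D) \<longleftrightarrow> P \<odot> D \<odot> D [^] k = D [^] k"
    using eprod_left_fixed_iff[OF drazin_projector_factors(1,2)[OF D Y], of "P \<odot> D"] by auto
  moreover have "Y \<odot> D = Y \<odot> D \<odot> (D \<odot> P) \<longleftrightarrow> D [^] k = D [^] Suc k \<odot> P"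
    using eprod_right_fixed_iff[OF drazin_projector_factors(3,4)[OF D Y], of "D \<odot> P"] D
    by (auto simp: tpow_Suc_right eprod_assoc)
  ultimately show ?thesis
    using left_fixed_iff_trange_subset[OF D _ PDP, of "D [^] k"] D by (auto simp: k_def P_def)
qed

end

theorem mainTheorem8:
  fixes N :: "nat list" and D :: "nat list \<Rightarrow> nat list \<Rightarrow> complex" and k :: nat
  assumes "\<forall>t<length N. 0 < N ! t"
    and "D \<in> tspace N"
    and "tind N D = k"
  shows "(eprod N (dmp N D) D = eprod N (cmp N D) D
            \<longleftrightarrow> trange N (tpow N D k) \<subseteq> trange N (mpinv N D))
       \<and> (eprod N D (mpd N D) = eprod N D (cmp N D)
            \<longleftrightarrow> tpow N D k = eprod N (tpow N D (Suc k)) (mpinv N D))"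
  using composite_inverses_iff[OF assms(2)] assms(3) by simp

end
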